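(* Let $N,n,m,p$ be positive integers, $A\in\mathbb{R}^{n\times n}$, $B\in\mathbb{R}^{n\times p}$, $C\in\mathbb{R}^{m\times n}$, $H\in\mathbb{R}^{n\times m}$, $W=[w_{ij}]\in\mathbb{R}^{N\times N}$ with $w_{ii}=0$ for all $i$, $\Delta=\mathrm{diag}(\delta_1,\dots,\delta_N)$ with $\delta_i\in\{0,1\}$, and $h>0$. Put $\mathcal{B}(h)=\int_0^h e^{A\tau}d\tau\,B$, $\mathcal{H}(h)=\int_0^h e^{A\tau}d\tau\,HC$, $\Phi_s=I_N\otimes e^{Ah}+W\otimes\mathcal{H}(h)$, $\Psi_s=\Delta\otimes\mathcal{B}(h)$. Assume $W$ is diagonalizable, let $v_1,\dots,v_N\in\mathbb{C}^{1\times N}$ be linearly independent row vectors with $v_kW=\lambda_kv_k$, and let $E_k=e^{Ah}+\lambda_k\mathcal{H}(h)$, $k=1,\dots,N$. Assume moreover that every $E_k$ is nonsingular. Then the networked sampled-data system $X(k+1)=\Phi_sX(k)+\Psi_sU(k)$ is controllable if and only if the following three conditions all hold: (1) the pair $(W,\Delta)$ is controllable; (2) the pair $(E_k,\mathcal{B}(h))$ is controllable for every $k=1,\dots,N$; (3) whenever $\theta\in\mathbb{C}$ is a common eigenvalue of $E_{k_1},\dots,E_{k_q}$ for distinct indices $k_1,\dots,k_q\in\{1,\dots,N\}$ with $1<q\le N$, then $(v_{k_1}\otimes\xi_{k_1}+\dots+v_{k_q}\otimes\xi_{k_q})(\Delta\otimes\mathcal{B}(h))\neq0$ for all $\xi_j\in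 M(\theta\,|\,E_j)$, $j=k_1,\dots,k_q$, with $(\xi_{k_1},\dots,\xi_{k_q})\neq0$.
   Context: The networked sampled-data system is the discrete-time system $X(k+1)=\Phi_sX(k)+\Psi_sU(k)$, $X(k)\in\mathbb{R}^{Nn}$, $U(k)\in\mathbb{R}^{Np}$; it is called controllable if every initial state can be steered to the origin in finitely many steps. For $F\in\mathbb{C}^{q\times q}$, $G\in\mathbb{C}^{q\times s}$, the pair $(F,G)$ is called controllable if $\mathrm{rank}[sI_q-F,\ G]=q$ for every $s\in\mathbb{C}$. $M(\theta\,|\,E)=\{\xi:\ \xi E=\theta\xi\}$ is the left eigenspace of the square matrix $E$ for $\theta$. $\otimes$ is the Kronecker product. *)

theory Defs
  imports "HOL-Analysis.Analysis"
begin

(* Matrices are HOL-Analysis matrices 'a^'cols^'rows; dimensions are finite types.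
   Row vectors of length k are vectors 'a^'k, and  x v* M  is row-vector times matrix. *)

primrec mpow :: "'a::semiring_1^'n^'n \<Rightarrow> nat \<Rightarrow> 'a^'n^'n" where
  "mpow A 0 = mat 1"
| "mpow A (Suc k) = A ** mpow A k"

definition mexp :: "real^'n^'n \<Rightarrow> real^'n^'n" where
  "mexp A = (\<Sum>k. (1 / fact k) *\<^sub>R mpow A k)"

definition kron :: "'a::times^'c1^'r1 \<Rightarrow> 'a^'c2^'r2 \<Rightarrow> 'a^('c1 \<times> 'c2)^('r1 \<times> 'r2)" where
  "kron A B = (\<chi> i j. A $ fst i $ fst j * B $ snd i $ snd j)"

definition kronv :: "'a::times^'k1 \<Rightarrow> 'a^'k2 \<Rightarrow> 'a^('k1 \<times> 'k2)" where
  "kronv x y = (\<chi> i. x $ fst i * y $ snd i)"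

definition cmat :: "real^'c^'r \<Rightarrow> complex^'c^'r" where
  "cmat M = (\<chi> i j. complex_of_real (M $ i $ j))"

definition pair_controllable :: "complex^'q^'q \<Rightarrow> complex^'s^'q \<Rightarrow> bool" where
  "pair_controllable F G \<longleftrightarrow>
     (\<forall>s::complex. rank ((\<chi> i j. case j of Inl a \<Rightarrow> (mat s - F) $ i $ a
                                         | Inr b \<Rightarrow> G $ i $ b) :: complex^('q + 's)^'q)
                    = CARD('q))"

definition left_eigenspace :: "complex \<Rightarrow> complex^'n^'n \<Rightarrow> (complex^'n) set" where
  "left_eigenspace \<theta> E = {\<xi>. \<xi> v* E = \<theta> *s \<xi>}"

primrec dtraj :: "real^'x^'x \<Rightarrow> real^'u^'x \<Rightarrow> real^'x \<Rightarrow> (nat \<Rightarrow> real^'u) \<Rightarrow> nat \<Rightarrow> real^'x" where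
  "dtraj Phi Psi X0 U 0 = X0"
| "dtraj Phi Psi X0 U (Suc k) = Phi *v dtraj Phi Psi X0 U k + Psi *v U k"

definition dt_controllable :: "real^'x^'x \<Rightarrow> real^'u^'x \<Rightarrow> bool" where
  "dt_controllable Phi Psi \<longleftrightarrow> (\<forall>X0. \<exists>K U. dtraj Phi Psi X0 U K = 0)"

end

theory Submission
  imports Defs "HOL-Computational_Algebra.Fundamental_Theorem_Algebra"
begin

(* Over the complex numbers the PBH test applies: a discrete-time system (Phi, Psi) can be steered
   to the origin iff no left eigenvector of Phi with nonzero eigenvalue is annihilated by Psi.
   As all E_k are nonsingular, so is Phi_s, and this is controllability of the pair (Phi_s, Psi_s).

   Since the v_k form a basis of left eigenvectors of W, every row vector of length Nn is uniquely
   a sum of the v_k (x) xi_k, and (sum v_k (x) xi_k) Phi_s = sum v_k (x) xi_k E_k.  So the left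
   eigenvectors of Phi_s for theta are these sums with every xi_k in M(theta | E_k), and
   (v_k (x) xi_k) Psi_s = v_k Delta (x) xi_k B(h).  Eigenvectors with a single nonzero component
   give condition (2), those with several give condition (3).  Condition (1) comes from the
   eigenvectors w (x) xi of Phi_s built from any left eigenvector w of W for some s and a left
   eigenvector xi of e^{Ah} + s H(h), which always exists. *)

section \<open>Row vectors and the rank condition\<close>

lemma vector_matrix_mult_sum:
  "(\<Sum>i\<in>I. f i) v* (M::'a::comm_semiring_1^'n^'m) = (\<Sum>i\<in>I. f i v* M)"
  by (simp add: vec_eq_iff vector_matrix_mult_def sum_component sum_distrib_right sum.swap[of _ I])

lemma vector_matrix_mult_eq_sum_rows:
  "x v* (A::'a::comm_semiring_1^'n^'m) = (\<Sum>i\<in>UNIV. x $ i *s A $ i)"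
  by (simp add: vec_eq_iff vector_matrix_mult_def sum_component)

lemma vector_matrix_mult_mat [simp]: "x v* mat c = c *s (x::'a::comm_semiring_1^'n)"
  by (simp add: vec_eq_iff vector_matrix_mult_def mat_def mult_delta_right sum.delta mult.commute
      cong: if_cong)

lemma rank_eq_nrows_iff:
  fixes A :: "'a::field^'c^'r"
  shows "rank A = CARD('r) \<longleftrightarrow> (\<forall>z. z v* A = 0 \<longrightarrow> z = 0)"
proof -
  let ?f = "(*v) (transpose A)"
  have row_axis: "?f (axis i 1) = row i A" for i
    by (simp add: vector_matrix_mult_eq_sum_rows axis_def row_def if_distrib[of "\<lambda>x. x *s _"]
        cong: if_cong)
  have "rows A = range (\<lambda>i. row i A)"
    by (auto simp: rows_def)
  also have "\<dots> = ?f ` cart_basis"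
    by (simp only: cart_basis_def Setcompr_eq_image image_image row_axis)
  finally have rows: "rows A = ?f ` cart_basis" .
  have card_basis: "card (cart_basis :: ('a^'r) set) = CARD('r)"
    by (rule card_cart_basis)
  have "rank A = CARD('r) \<longleftrightarrow> inj ?f"
  proof
    assume "inj ?f"
    then have "vec.dim (?f ` cart_basis) = vec.dim (cart_basis :: ('a^'r) set)"
      by (intro vec.dim_image_eq) (auto intro: inj_on_subset)
    then show "rank A = CARD('r)"
      by (simp add: row_rank_def_gen rows vec.dim_eq_card_independent vec.independent_Basis card_basis)
  next
    assume rk: "rank A = CARD('r)"
    have "card (?f ` cart_basis) \<le> CARD('r)"
      using card_image_le[OF finite_cart_basis] card_basis by metis
    moreover have "vec.dim (?f ` cart_basis) \<le> card (?f ` cart_basis)"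
      by (rule vec.dim_le_card[OF vec.span_superset]) (simp add: finite_cart_basis)
    ultimately have card_eq: "card (?f ` cart_basis) = card (cart_basis :: ('a^'r) set)"
      and dim_eq: "card (?f ` cart_basis) = vec.dim (?f ` cart_basis)"
      using rk by (simp_all add: row_rank_def_gen rows card_basis)
    have "vec.independent (?f ` cart_basis)"
      using vec.card_eq_dim[OF order.refl dim_eq] by (simp add: finite_cart_basis vec.span_superset)
    moreover have "inj_on ?f cart_basis"
      using card_eq by (simp add: inj_on_iff_eq_card finite_cart_basis)
    ultimately show "inj ?f"
      using vec.inj_on_span_iff_independent_image[of "transpose A" cart_basis] by (simp add: vec.span_Basis)
  qed
  then show ?thesis
    by (simp add: vec.inj_iff_eq_0)
qed

lemma vector_matrix_mult_block_eq_0_iff: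
  fixes X :: "'a::comm_semiring_1^'q^'r" and Y :: "'a^'s^'r"
  shows "w v* ((\<chi> i j. case j of Inl a \<Rightarrow> X $ i $ a | Inr b \<Rightarrow> Y $ i $ b) :: 'a^('q + 's)^'r) = 0
     \<longleftrightarrow> w v* X = 0 \<and> w v* Y = 0"
proof -
  have "(w v* ((\<chi> i j. case j of Inl a \<Rightarrow> X $ i $ a | Inr b \<Rightarrow> Y $ i $ b) :: 'a^('q + 's)^'r)) $ j
     = (case j of Inl a \<Rightarrow> (w v* X) $ a | Inr b \<Rightarrow> (w v* Y) $ b)" for j
    by (cases j) (simp_all add: vector_matrix_mult_def)
  then show ?thesis
    by (auto simp: vec_eq_iff split: sum.split)
qed

lemma pair_controllable_iff_left_eigenvectors:
  "pair_controllable F G \<longleftrightarrow> (\<forall>s w. w v* F = s *s w \<and> w v* G = 0 \<longrightarrow> w = 0)"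
proof -
  have "w v* (mat s - F) = 0 \<longleftrightarrow> w v* F = s *s w" for w s
    by (auto simp: vector_matrix_mult_diff_rdistrib)
  then show ?thesis
    unfolding pair_controllable_def rank_eq_nrows_iff vector_matrix_mult_block_eq_0_iff by auto
qed

lemma vector_matrix_mult_eq_0_if_det_nonzero:
  fixes M :: "'a::field^'n^'n"
  assumes "det M \<noteq> 0" "x v* M = 0"
  shows "x = 0"
proof -
  obtain M' where "M ** M' = mat 1"
    using assms(1) invertible_det_nz invertible_right_inverse by blast
  then have "x = (x v* M) v* M'"
    by (simp add: vector_matrix_mul_assoc)
  with assms(2) show ?thesis by simp
qed

lemma bij_vector_matrix_mult:
  fixes M :: "'a::field^'n^'n"
  assumes "\<forall>x. x v* M = 0 \<longrightarrow> x = 0"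
  shows "bij (\<lambda>x. x v* M)"
proof -
  have eq: "(\<lambda>x. x v* M) = (*v) (transpose M)"
    by (simp add: fun_eq_iff)
  have inj: "inj ((*v) (transpose M))"
    using assms by (simp add: vec.inj_iff_eq_0)
  then have "surj ((*v) (transpose M))"
    by (rule vec.linear_inj_imp_surj[OF matrix_vector_mul_linear_gen])
  with inj show ?thesis
    unfolding eq bij_def ..
qed

section \<open>Left eigenvectors in invariant subspaces\<close>

definition poly_act :: "'a::field poly \<Rightarrow> 'a^'n^'n \<Rightarrow> 'a^'n \<Rightarrow> 'a^'n" where
  "poly_act p M z = (\<Sum>i\<le>degree p. coeff p i *s ((\<lambda>w. w v* M) ^^ i) z)"

lemma poly_act_eq_sum:
  "degree p \<le> n \<Longrightarrow> poly_act p M z = (\<Sum>i\<le>n. coeff p i *s ((\<lambda>w. w v* M) ^^ i) z)"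
  unfolding poly_act_def by (rule sum.mono_neutral_left) (auto simp: coeff_eq_0)

lemma poly_act_add: "poly_act (p + q) M z = poly_act p M z + poly_act q M z"
proof -
  let ?n = "max (degree p) (degree q)"
  show ?thesis
    by (simp add: poly_act_eq_sum[of "p + q" ?n] poly_act_eq_sum[of p ?n] poly_act_eq_sum[of q ?n]
        degree_add_le vector_sadd_rdistrib sum.distrib)
qed

lemma poly_act_smult: "poly_act (smult c p) M z = c *s poly_act p M z"
  by (simp add: poly_act_eq_sum[of "smult c p" "degree p"] poly_act_def vec.scale_sum_right)

lemma poly_act_pCons_0: "poly_act (pCons 0 p) M z = poly_act p M z v* M"
proof -
  have "poly_act (pCons 0 p) M z
      = (\<Sum>i\<le>Suc (degree p). coeff (pCons 0 p) i *s ((\<lambda>w. w v* M) ^^ i) z)"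
    by (rule poly_act_eq_sum) (simp add: degree_pCons_le)
  also have "\<dots> = (\<Sum>i\<le>degree p. coeff p i *s ((\<lambda>w. w v* M) ^^ Suc i) z)"
    unfolding sum.atMost_Suc_shift by simp
  also have "\<dots> = poly_act p M z v* M"
    by (simp add: poly_act_def vector_matrix_mult_sum scalar_vector_matrix_assoc funpow_swap1)
  finally show ?thesis .
qed

lemma poly_act_linear_factor:
  "poly_act ([:-r, 1:] * q) M z = poly_act q M z v* M - r *s poly_act q M z"
proof -
  have split: "[:-r, 1:] * q = smult (-r) q + pCons 0 q"
    by simp
  show ?thesis
    unfolding split poly_act_add poly_act_smult poly_act_pCons_0 by (simp add: vec_eq_iff)
qed

lemma poly_act_monom: "poly_act (monom c k) M z = c *s ((\<lambda>w. w v* M) ^^ k) z"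
  by (simp add: poly_act_eq_sum[of "monom c k" k] degree_monom_le coeff_monom
      if_distrib[of "\<lambda>x. x *s _"] cong: if_cong)

lemma poly_act_0 [simp]: "poly_act 0 M z = 0"
  by (simp add: poly_act_def)

lemma poly_act_sum: "poly_act (\<Sum>a\<in>A. f a) M z = (\<Sum>a\<in>A. poly_act (f a) M z)"
  by (induction A rule: infinite_finite_induct) (simp_all add: poly_act_add)

lemma poly_act_in_invariant_subspace:
  assumes "vec.subspace Z" "\<And>w. w \<in> Z \<Longrightarrow> w v* M \<in> Z" "z \<in> Z"
  shows "poly_act p M z \<in> Z"
proof -
  have "((\<lambda>w. w v* M) ^^ i) z \<in> Z" for i
    by (induction i) (simp_all add: assms)
  then show ?thesis
    unfolding poly_act_def by (intro vec.subspace_sum vec.subspace_scale assms(1))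
qed

lemma poly_act_annihilating_exists:
  fixes M :: "'a::field^'n^'n"
  shows "\<exists>p. p \<noteq> 0 \<and> poly_act p M z = 0"
proof -
  let ?f = "\<lambda>i. ((\<lambda>w. w v* M) ^^ i) z"
  let ?n = "CARD('n)"
  show ?thesis
  proof (cases "inj_on ?f {..?n}")
    case False
    then obtain i j where ij: "i \<noteq> j" "?f i = ?f j"
      unfolding inj_on_def by blast
    let ?p = "monom (1::'a) i + monom (-1) j"
    have "?p \<noteq> 0"
    proof
      assume "?p = 0"
      then have "coeff ?p i = 0"
        by simp
      with ij show False
        by (simp add: coeff_monom)
    qed
    moreover have "poly_act ?p M z = 0"
      using ij by (simp add: poly_act_add poly_act_monom vec_eq_iff)
    ultimately show ?thesis by blast
  next
    case True
    have "card (?f ` {..?n}) > vec.dim (UNIV :: ('a^'n) set)"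
      using True by (simp add: card_image vec.dim_UNIV card_cart_basis)
    then have "\<not> vec.independent (?f ` {..?n})"
      using vec.independent_card_le_dim[OF subset_UNIV] by (meson not_le)
    then obtain c u where c: "(\<Sum>u\<in>?f ` {..?n}. c u *s u) = 0" "u \<in> ?f ` {..?n}" "c u \<noteq> 0"
      unfolding vec.independent_explicit by auto
    then obtain i0 where i0: "i0 \<le> ?n" "u = ?f i0"
      by auto
    let ?p = "\<Sum>i\<le>?n. monom (c (?f i)) i"
    have "coeff ?p i0 = c (?f i0)"
      using i0 by (simp add: coeff_sum coeff_monom)
    then have "?p \<noteq> 0"
      using c i0 by auto
    moreover have "poly_act ?p M z = (\<Sum>u\<in>?f ` {..?n}. c u *s u)"
      by (simp add: poly_act_sum poly_act_monom sum.reindex[OF True])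
    ultimately show ?thesis
      using c by auto
  qed
qed

(* Split p into linear factors: the last nonzero partial product, applied to z, is an eigenvector. *)
lemma left_eigenvector_from_annihilating_poly:
  fixes M :: "complex^'n^'n"
  assumes Z: "vec.subspace Z" "\<And>w. w \<in> Z \<Longrightarrow> w v* M \<in> Z" and z: "z \<in> Z" "z \<noteq> 0"
    and "p \<noteq> 0" "poly_act p M z = 0"
  shows "\<exists>w\<in>Z. w \<noteq> 0 \<and> (\<exists>\<theta>. w v* M = \<theta> *s w)"
  using assms(5,6)
proof (induction "degree p" arbitrary: p rule: less_induct)
  case less
  show ?case
  proof (cases "degree p = 0")
    case True
    then obtain c where "p = [:c:]" "c \<noteq> 0"
      using less.prems by (metis degree_eq_zeroE pCons_eq_0_iff)
    then show ?thesis
      using less.prems z by (simp add: poly_act_def)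
  next
    case False
    have "\<exists>r. poly p r = 0"
      by (rule fundamental_theorem_of_algebra_alt) (use False in auto)
    then obtain r where "poly p r = 0" ..
    then obtain q where pq: "p = [:-r, 1:] * q"
      by (auto simp: poly_eq_0_iff_dvd elim: dvdE)
    with less.prems have "q \<noteq> 0"
      by auto
    then have "degree p = degree [:-r, 1:] + degree q"
      unfolding pq by (intro degree_mult_eq) auto
    then have "degree q < degree p"
      by simp
    show ?thesis
    proof (cases "poly_act q M z = 0")
      case True
      show ?thesis
        by (rule less.hyps) fact+
    next
      case False
      moreover have "poly_act q M z v* M = r *s poly_act q M z"
        using less.prems(2) unfolding pq poly_act_linear_factor by simp
      ultimately show ?thesis
        using poly_act_in_invariant_subspace[OF Z z(1)] by blast
    qed
  qed
qed

lemma left_eigenvector_in_invariant_subspace: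
  fixes M :: "complex^'n^'n"
  assumes "vec.subspace Z" "\<And>w. w \<in> Z \<Longrightarrow> w v* M \<in> Z" "z \<in> Z" "z \<noteq> 0"
  shows "\<exists>w\<in>Z. w \<noteq> 0 \<and> (\<exists>\<theta>. w v* M = \<theta> *s w)"
  using poly_act_annihilating_exists left_eigenvector_from_annihilating_poly[OF assms] by blast

section \<open>The PBH test for discrete-time systems\<close>

definition cvec :: "real^'n \<Rightarrow> complex^'n" where
  "cvec x = (\<chi> i. complex_of_real (x $ i))"

definition vdot :: "'a::comm_semiring_1^'n \<Rightarrow> 'a^'n \<Rightarrow> 'a" where
  "vdot z y = (\<Sum>i\<in>UNIV. z $ i * y $ i)"

lemma cvec_0 [simp]: "cvec 0 = 0"
  by (simp add: cvec_def vec_eq_iff)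

lemma cvec_add: "cvec (x + y) = cvec x + cvec y"
  by (simp add: cvec_def vec_eq_iff)

lemma cmat_mult_cvec: "cmat M *v cvec x = cvec (M *v x)"
  by (simp add: vec_eq_iff matrix_vector_mult_def cmat_def cvec_def)

lemma vdot_0_left [simp]: "vdot 0 y = 0"
  by (simp add: vdot_def)

lemma vdot_0_right [simp]: "vdot z 0 = 0"
  by (simp add: vdot_def)

lemma vdot_add_left: "vdot (a + b) y = vdot a y + vdot b y"
  by (simp add: vdot_def distrib_right sum.distrib)

lemma vdot_add_right: "vdot z (a + b) = vdot z a + vdot z b"
  by (simp add: vdot_def distrib_left sum.distrib)

lemma vdot_scale_left: "vdot (c *s z) y = c * vdot z y"
  by (simp add: vdot_def sum_distrib_left mult.assoc)

lemma vdot_matrix_vector_mult: "vdot z (A *v y) = vdot (z v* A) y"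
proof -
  have "vdot z (A *v y) = (\<Sum>i\<in>UNIV. \<Sum>j\<in>UNIV. z $ i * A $ i $ j * y $ j)"
    by (simp add: vdot_def matrix_vector_mult_def sum_distrib_left mult.assoc)
  also have "\<dots> = vdot (z v* A) y"
    by (subst sum.swap) (simp add: vdot_def vector_matrix_mult_def sum_distrib_right)
  finally show ?thesis .
qed

lemma vdot_cvec_axis: "vdot z (cvec (axis i 1)) = z $ i"
  by (simp add: vdot_def cvec_def axis_def if_distrib[of complex_of_real] if_distrib[of "\<lambda>x. _ * x"]
      cong: if_cong)

lemma vdot_cvec_cvec: "vdot (cvec y) (cvec r) = complex_of_real (y \<bullet> r)"
  by (simp add: vdot_def cvec_def inner_vec_def)

lemma dt_controllable_left_eigenvector:
  assumes "dt_controllable Phi Psi" and "z \<noteq> 0" and eig: "z v* cmat Phi = \<theta> *s z"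
    and "\<theta> \<noteq> 0"
  shows "z v* cmat Psi \<noteq> 0"
proof
  assume annih: "z v* cmat Psi = 0"
  have decay: "vdot z (cvec (dtraj Phi Psi X0 U K)) = \<theta> ^ K * vdot z (cvec X0)" for X0 U K
  proof (induction K)
    case (Suc K)
    have "vdot z (cvec (dtraj Phi Psi X0 U (Suc K)))
        = vdot (z v* cmat Phi) (cvec (dtraj Phi Psi X0 U K)) + vdot (z v* cmat Psi) (cvec (U K))"
      by (simp add: cvec_add vdot_add_right cmat_mult_cvec[symmetric] vdot_matrix_vector_mult)
    also have "\<dots> = \<theta> * vdot z (cvec (dtraj Phi Psi X0 U K))"
      by (simp add: eig annih vdot_scale_left)
    finally show ?case
      using Suc by simp
  qed simp
  have "z $ i = 0" for i
  proof -
    obtain K U where "dtraj Phi Psi (axis i 1) U K = 0"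
      using assms(1) unfolding dt_controllable_def by blast
    with decay[of "axis i 1" U K] have "\<theta> ^ K * z $ i = 0"
      by (simp add: vdot_cvec_axis)
    with \<open>\<theta> \<noteq> 0\<close> show ?thesis
      by simp
  qed
  with \<open>z \<noteq> 0\<close> show False
    by (simp add: vec_eq_iff)
qed

definition reachable_set :: "real^'x^'x \<Rightarrow> real^'u^'x \<Rightarrow> nat \<Rightarrow> (real^'x) set" where
  "reachable_set Phi Psi K = range (\<lambda>U. dtraj Phi Psi 0 U K)"

lemma dtraj_free_plus_forced:
  "dtraj Phi Psi X0 U K = dtraj Phi Psi X0 (\<lambda>_. 0) K + dtraj Phi Psi 0 U K"
  by (induction K) (simp_all add: matrix_vector_right_distrib)

lemma dtraj_zero_input [simp]: "dtraj Phi Psi 0 (\<lambda>_. 0) K = 0"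
  by (induction K) simp_all

lemma dtraj_add_input:
  "dtraj Phi Psi 0 (\<lambda>j. U1 j + U2 j) K = dtraj Phi Psi 0 U1 K + dtraj Phi Psi 0 U2 K"
  by (induction K) (simp_all add: matrix_vector_right_distrib)

lemma dtraj_scale_input:
  "dtraj Phi Psi 0 (\<lambda>j. c *\<^sub>R U j) K = c *\<^sub>R dtraj Phi Psi 0 U K"
  by (induction K) (simp_all add: matrix_vector_right_distrib matrix_vector_mult_scaleR scaleR_add_right)

lemma dtraj_cong: "(\<And>j. j < K \<Longrightarrow> U j = U' j) \<Longrightarrow> dtraj Phi Psi X U K = dtraj Phi Psi X U' K"
  by (induction K) auto

lemma dtraj_delayed_input:
  "dtraj Phi Psi 0 (\<lambda>j. if j = 0 then 0 else U (j - 1)) (Suc K) = dtraj Phi Psi 0 U K"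
  by (induction K) simp_all

lemma subspace_reachable_set: "subspace (reachable_set Phi Psi K)"
  unfolding subspace_def reachable_set_def
proof (intro conjI ballI allI)
  show "0 \<in> range (\<lambda>U. dtraj Phi Psi 0 U K)"
    using rangeI[of "\<lambda>U. dtraj Phi Psi 0 U K" "\<lambda>_. 0"] by simp
next
  fix x y
  assume "x \<in> range (\<lambda>U. dtraj Phi Psi 0 U K)" "y \<in> range (\<lambda>U. dtraj Phi Psi 0 U K)"
  then show "x + y \<in> range (\<lambda>U. dtraj Phi Psi 0 U K)"
    by (auto simp flip: dtraj_add_input)
next
  fix c x
  assume "x \<in> range (\<lambda>U. dtraj Phi Psi 0 U K)"
  then show "c *\<^sub>R x \<in> range (\<lambda>U. dtraj Phi Psi 0 U K)"
    by (auto simp flip: dtraj_scale_input)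
qed

lemma reachable_set_Suc_mono: "reachable_set Phi Psi K \<subseteq> reachable_set Phi Psi (Suc K)"
proof
  fix x
  assume "x \<in> reachable_set Phi Psi K"
  then obtain U where "x = dtraj Phi Psi 0 U K"
    unfolding reachable_set_def by blast
  then have "x = dtraj Phi Psi 0 (\<lambda>j. if j = 0 then 0 else U (j - 1)) (Suc K)"
    by (simp only: dtraj_delayed_input)
  then show "x \<in> reachable_set Phi Psi (Suc K)"
    unfolding reachable_set_def by blast
qed

lemma reachable_set_mono: "K \<le> K' \<Longrightarrow> reachable_set Phi Psi K \<subseteq> reachable_set Phi Psi K'"
  by (rule lift_Suc_mono_le[of "reachable_set Phi Psi", OF reachable_set_Suc_mono])

lemma matrix_vector_mult_reachable_set:
  assumes "r \<in> reachable_set Phi Psi K"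
  shows "Phi *v r \<in> reachable_set Phi Psi (Suc K)"
proof -
  obtain U where "r = dtraj Phi Psi 0 U K"
    using assms unfolding reachable_set_def by blast
  moreover have "dtraj Phi Psi 0 (U(K := 0)) K = dtraj Phi Psi 0 U K"
    by (rule dtraj_cong) simp
  ultimately have "Phi *v r = dtraj Phi Psi 0 (U(K := 0)) (Suc K)"
    by simp
  then show ?thesis
    unfolding reachable_set_def by blast
qed

lemma input_in_reachable_set: "Psi *v u \<in> reachable_set Phi Psi 1"
  unfolding reachable_set_def using rangeI[of "\<lambda>U. dtraj Phi Psi 0 U 1" "\<lambda>_. u"] by simp

lemma dt_controllable_if_reachable_set_UNIV:
  assumes "reachable_set Phi Psi K = UNIV"
  shows "dt_controllable Phi Psi"
  unfolding dt_controllable_def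
proof
  fix X0
  have "- dtraj Phi Psi X0 (\<lambda>_. 0) K \<in> reachable_set Phi Psi K"
    using assms by simp
  then obtain U where U: "- dtraj Phi Psi X0 (\<lambda>_. 0) K = dtraj Phi Psi 0 U K"
    unfolding reachable_set_def by blast
  have "dtraj Phi Psi X0 U K = dtraj Phi Psi X0 (\<lambda>_. 0) K + dtraj Phi Psi 0 U K"
    by (rule dtraj_free_plus_forced)
  then have "dtraj Phi Psi X0 U K = 0"
    by (simp flip: U)
  then show "\<exists>K U. dtraj Phi Psi X0 U K = 0"
    by blast
qed

lemma reachable_set_UNIV_if_Union:
  assumes "(\<Union>K. reachable_set Phi Psi K) = UNIV"
  shows "\<exists>K. reachable_set Phi Psi K = UNIV"
proof -
  have "\<forall>i. \<exists>K. axis i 1 \<in> reachable_set Phi Psi K"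
    using assms by blast
  then obtain Kf where Kf: "\<And>i. axis i 1 \<in> reachable_set Phi Psi (Kf i)"
    by metis
  define K where "K = Max (range Kf)"
  have axis: "axis i 1 \<in> reachable_set Phi Psi K" for i
    using Kf reachable_set_mono[of "Kf i" K] by (auto simp: K_def)
  have "x \<in> reachable_set Phi Psi K" for x
  proof -
    have "(\<Sum>i\<in>UNIV. x $ i *\<^sub>R axis i 1) \<in> reachable_set Phi Psi K"
      by (intro subspace_sum subspace_scale subspace_reachable_set axis)
    then show ?thesis
      by (simp add: basis_expansion flip: scalar_mult_eq_scaleR)
  qed
  then show ?thesis
    by blast
qed

lemma left_eigenvector_annihilating_invariant_subspace:
  fixes Phi :: "real^'x^'x"
  assumes "subspace S" "S \<noteq> UNIV" and invariant: "\<And>r. r \<in> S \<Longrightarrow> Phi *v r \<in> S"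
  shows "\<exists>w \<theta>. w \<noteq> 0 \<and> w v* cmat Phi = \<theta> *s w \<and> (\<forall>r\<in>S. vdot w (cvec r) = 0)"
proof -
  have "span S = S"
    using assms(1) by (simp add: span_eq_iff)
  then have "span S \<subset> span UNIV"
    unfolding span_UNIV using assms(2) by blast
  then obtain y :: "real^'x" where y: "y \<noteq> 0" "\<And>r. r \<in> span S \<Longrightarrow> orthogonal y r"
    by (rule orthogonal_to_subspace_exists_gen) blast+
  define Z where "Z = {z. \<forall>r\<in>S. vdot z (cvec r) = 0}"
  have "cvec y \<in> Z"
    using y(2) by (simp add: Z_def vdot_cvec_cvec orthogonal_def span_base)
  moreover have "cvec y \<noteq> 0"
    using y(1) by (simp add: cvec_def vec_eq_iff)
  moreover have "vec.subspace Z"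
    by (simp add: vec.subspace_def Z_def vdot_add_left vdot_scale_left)
  moreover have "w v* cmat Phi \<in> Z" if "w \<in> Z" for w
    using that invariant by (simp add: Z_def cmat_mult_cvec flip: vdot_matrix_vector_mult)
  ultimately obtain w \<theta> where "w \<in> Z" "w \<noteq> 0" "w v* cmat Phi = \<theta> *s w"
    using left_eigenvector_in_invariant_subspace by metis
  then show ?thesis
    unfolding Z_def by blast
qed

lemma subspace_Union_reachable_set: "subspace (\<Union>K. reachable_set Phi Psi K)"
  unfolding subspace_def
proof (intro conjI ballI allI)
  show "0 \<in> (\<Union>K. reachable_set Phi Psi K)"
    using subspace_0[OF subspace_reachable_set] by blast
next
  fix x y
  assume "x \<in> (\<Union>K. reachable_set Phi Psi K)" "y \<in> (\<Union>K. reachable_set Phi Psi K)"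
  then obtain K1 K2 where "x \<in> reachable_set Phi Psi K1" "y \<in> reachable_set Phi Psi K2"
    by blast
  then have "x \<in> reachable_set Phi Psi (max K1 K2)" "y \<in> reachable_set Phi Psi (max K1 K2)"
    using reachable_set_mono[of K1 "max K1 K2" Phi Psi] reachable_set_mono[of K2 "max K1 K2" Phi Psi]
    by auto
  then show "x + y \<in> (\<Union>K. reachable_set Phi Psi K)"
    using subspace_add[OF subspace_reachable_set] by blast
next
  fix c x
  assume "x \<in> (\<Union>K. reachable_set Phi Psi K)"
  then obtain K where "x \<in> reachable_set Phi Psi K"
    by blast
  then have "c *\<^sub>R x \<in> reachable_set Phi Psi K"
    by (rule subspace_scale[OF subspace_reachable_set])
  then show "c *\<^sub>R x \<in> (\<Union>K. reachable_set Phi Psi K)"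
    by blast
qed

lemma dt_controllable_if_pair_controllable:
  fixes Phi :: "real^'x^'x" and Psi :: "real^'u^'x"
  assumes "pair_controllable (cmat Phi) (cmat Psi)"
  shows "dt_controllable Phi Psi"
proof -
  define S where "S = (\<Union>K. reachable_set Phi Psi K)"
  have "subspace S"
    unfolding S_def by (rule subspace_Union_reachable_set)
  have "S = UNIV"
  proof (rule ccontr)
    assume "S \<noteq> UNIV"
    have "Phi *v r \<in> S" if "r \<in> S" for r
    proof -
      from that obtain K where "r \<in> reachable_set Phi Psi K"
        unfolding S_def by blast
      then have "Phi *v r \<in> reachable_set Phi Psi (Suc K)"
        by (rule matrix_vector_mult_reachable_set)
      then show ?thesis
        unfolding S_def by blast
    qed
    then have "\<exists>w \<theta>. w \<noteq> 0 \<and> w v* cmat Phi = \<theta> *s w \<and> (\<forall>r\<in>S. vdot w (cvec r) = 0)"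
      by (rule left_eigenvector_annihilating_invariant_subspace[OF \<open>subspace S\<close> \<open>S \<noteq> UNIV\<close>])
    then obtain w \<theta> where w: "w \<noteq> 0" "w v* cmat Phi = \<theta> *s w"
      and annih: "\<forall>r\<in>S. vdot w (cvec r) = 0"
      by blast
    have "(w v* cmat Psi) $ j = 0" for j
    proof -
      have "Psi *v axis j 1 \<in> S"
        unfolding S_def using input_in_reachable_set by blast
      have "(w v* cmat Psi) $ j = vdot (w v* cmat Psi) (cvec (axis j 1))"
        by (simp add: vdot_cvec_axis)
      also have "\<dots> = vdot w (cvec (Psi *v axis j 1))"
        by (simp add: cmat_mult_cvec flip: vdot_matrix_vector_mult)
      also have "\<dots> = 0"
        using annih \<open>Psi *v axis j 1 \<in> S\<close> by blast
      finally show ?thesis .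
    qed
    then have "w v* cmat Psi = 0"
      by (simp add: vec_eq_iff)
    with w assms show False
      unfolding pair_controllable_iff_left_eigenvectors by blast
  qed
  then have "\<exists>K. reachable_set Phi Psi K = UNIV"
    unfolding S_def by (rule reachable_set_UNIV_if_Union)
  then show ?thesis
    using dt_controllable_if_reachable_set_UNIV by blast
qed

(* Steering to the origin says nothing about left eigenvectors for the eigenvalue 0, so these
   must be excluded. *)
theorem dt_controllable_iff_pair_controllable:
  fixes Phi :: "real^'x^'x" and Psi :: "real^'u^'x"
  assumes "\<forall>z. z v* cmat Phi = 0 \<longrightarrow> z = 0"
  shows "dt_controllable Phi Psi \<longleftrightarrow> pair_controllable (cmat Phi) (cmat Psi)"
proof
  assume ctrl: "dt_controllable Phi Psi"
  show "pair_controllable (cmat Phi) (cmat Psi)"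
    unfolding pair_controllable_iff_left_eigenvectors
  proof (intro allI impI)
    fix \<theta> z
    assume eig: "z v* cmat Phi = \<theta> *s z \<and> z v* cmat Psi = 0"
    show "z = 0"
    proof (cases "\<theta> = 0")
      case True
      with eig assms show ?thesis
        by simp
    next
      case False
      with eig show ?thesis
        using dt_controllable_left_eigenvector[OF ctrl] by blast
    qed
  qed
qed (rule dt_controllable_if_pair_controllable)

section \<open>Modal coordinates of Kronecker-structured systems\<close>

lemma sum_UNIV_prod: "(\<Sum>i\<in>UNIV. f i) = (\<Sum>a\<in>UNIV. \<Sum>b\<in>UNIV. f (a, b))"
  by (simp add: sum.cartesian_product flip: UNIV_Times_UNIV)

lemma kronv_vector_matrix_mult:
  "kronv x y v* kron P Q = kronv (x v* P) ((y::'a::comm_semiring_1^'k) v* Q)"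
  by (simp add: vec_eq_iff kronv_def kron_def vector_matrix_mult_def sum_UNIV_prod sum_product
      algebra_simps)

lemma kronv_add_right: "kronv x (a + b) = kronv x a + kronv x (b::'a::comm_semiring_1^'k)"
  by (simp add: vec_eq_iff kronv_def distrib_left)

lemma kronv_scale_left: "kronv (c *s x) b = c *s kronv x (b::'a::comm_semiring_1^'k)"
  by (simp add: vec_eq_iff kronv_def algebra_simps)

lemma kronv_scale_right: "kronv x (c *s b) = c *s kronv x (b::'a::comm_semiring_1^'k)"
  by (simp add: vec_eq_iff kronv_def algebra_simps)

lemma kronv_eq_0_iff [simp]:
  "kronv x (y::'a::{comm_semiring_1,semiring_no_zero_divisors}^'k) = 0 \<longleftrightarrow> x = 0 \<or> y = 0"
proof
  assume "kronv x y = 0"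
  then have "kronv x y $ (i, j) = 0" for i j
    by simp
  then have "x $ i * y $ j = 0" for i j
    by (simp add: kronv_def)
  then show "x = 0 \<or> y = 0"
    by (auto simp: vec_eq_iff)
qed (auto simp: vec_eq_iff kronv_def)

lemma cmat_add: "cmat (A + B) = cmat A + cmat B"
  by (simp add: cmat_def vec_eq_iff)

lemma cmat_kron: "cmat (kron P Q) = kron (cmat P) (cmat Q)"
  by (simp add: cmat_def kron_def vec_eq_iff)

lemma cmat_mat: "cmat (mat c) = mat (complex_of_real c)"
  by (simp add: cmat_def mat_def vec_eq_iff)

lemma kronv_vector_matrix_mult_network:
  fixes F G :: "'a::field^'n^'n" and W :: "'a^'N^'N"
  assumes "w v* W = s *s w"
  shows "kronv w \<xi> v* (kron (mat 1) F + kron W G) = kronv w (\<xi> v* (F + mat s ** G))"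
  using assms
  by (simp add: vector_matrix_mult_add_rdistrib kronv_vector_matrix_mult kronv_scale_left
      kronv_add_right kronv_scale_right scalar_vector_matrix_assoc
      flip: vector_matrix_mul_assoc)

definition mode_sum :: "('N::finite \<Rightarrow> 'a::comm_semiring_1^'N) \<Rightarrow> ('N \<Rightarrow> 'a^'n) \<Rightarrow> 'a^('N \<times> 'n)" where
  "mode_sum v \<xi> = (\<Sum>k\<in>UNIV. kronv (v k) (\<xi> k))"

lemma mode_sum_component: "mode_sum v \<xi> $ (a, i) = ((\<chi> k. \<xi> k $ i) v* (\<chi> k. v k)) $ a"
  by (simp add: mode_sum_def kronv_def vector_matrix_mult_def mult.commute)

lemma mode_sum_eq_sum:
  "(\<And>k. k \<notin> S \<Longrightarrow> \<xi> k = 0) \<Longrightarrow> mode_sum v \<xi> = (\<Sum>k\<in>S. kronv (v k) (\<xi> k))"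
  unfolding mode_sum_def by (rule sum.mono_neutral_right) (auto simp: vec_eq_iff kronv_def)

lemma mode_sum_scale: "c *s mode_sum v \<xi> = mode_sum v (\<lambda>k. c *s \<xi> k)"
  by (simp add: mode_sum_def vec_eq_iff sum_distrib_left kronv_def mult.left_commute)

lemma mode_sum_vector_matrix_mult_network:
  fixes F G :: "'a::field^'n^'n" and W :: "'a^'N^'N"
  assumes "\<forall>k. v k v* W = lam k *s v k"
  shows "mode_sum v \<xi> v* (kron (mat 1) F + kron W G) = mode_sum v (\<lambda>k. \<xi> k v* (F + mat (lam k) ** G))"
  by (simp add: mode_sum_def vector_matrix_mult_sum kronv_vector_matrix_mult_network[OF assms[rule_format]])

lemma bij_independent_rows:
  fixes v :: "'N::finite \<Rightarrow> 'a::field^'N"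
  assumes "\<forall>c. (\<Sum>k\<in>UNIV. c k *s v k) = 0 \<longrightarrow> (\<forall>k. c k = 0)"
  shows "bij (\<lambda>x. x v* (\<chi> k. v k))"
proof (rule bij_vector_matrix_mult, intro allI impI)
  fix x :: "'a^'N"
  assume "x v* (\<chi> k. v k) = 0"
  then have "(\<Sum>k\<in>UNIV. x $ k *s v k) = 0"
    by (simp add: vector_matrix_mult_eq_sum_rows)
  with assms show "x = 0"
    by (simp add: vec_eq_iff)
qed

lemma mode_sum_inject:
  fixes v :: "'N::finite \<Rightarrow> 'a::field^'N"
  assumes "\<forall>c. (\<Sum>k\<in>UNIV. c k *s v k) = 0 \<longrightarrow> (\<forall>k. c k = 0)"
  shows "mode_sum v \<xi> = mode_sum v \<eta> \<longleftrightarrow> \<xi> = \<eta>"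
proof
  assume eq: "mode_sum v \<xi> = mode_sum v \<eta>"
  have "((\<chi> k. \<xi> k $ i) v* (\<chi> k. v k)) $ a = ((\<chi> k. \<eta> k $ i) v* (\<chi> k. v k)) $ a" for a i
    using eq by (simp only: mode_sum_component[symmetric])
  then have "(\<chi> k. \<xi> k $ i) v* (\<chi> k. v k) = (\<chi> k. \<eta> k $ i) v* (\<chi> k. v k)" for i
    by (simp add: vec_eq_iff)
  moreover have "inj (\<lambda>x. x v* (\<chi> k. v k))"
    using bij_independent_rows[OF assms] by (rule bij_is_inj)
  ultimately have "(\<chi> k. \<xi> k $ i) = (\<chi> k. \<eta> k $ i)" for i
    unfolding inj_def by blast
  then show "\<xi> = \<eta>"
    by (simp add: fun_eq_iff vec_eq_iff)
qed simp

lemma mode_sum_surj: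
  fixes v :: "'N::finite \<Rightarrow> 'a::field^'N"
  assumes "\<forall>c. (\<Sum>k\<in>UNIV. c k *s v k) = 0 \<longrightarrow> (\<forall>k. c k = 0)"
  shows "\<exists>\<xi>. z = mode_sum v \<xi>"
proof -
  let ?f = "\<lambda>x. x v* (\<chi> k. v k)"
  define \<xi> where "\<xi> k = (\<chi> i. inv ?f (\<chi> a. z $ (a, i)) $ k)" for k
  have "surj ?f"
    using bij_independent_rows[OF assms] by (rule bij_is_surj)
  then have "inv ?f y v* (\<chi> k. v k) = y" for y
    using surj_f_inv_f by metis
  then have "mode_sum v \<xi> $ (a, i) = z $ (a, i)" for a i
    by (simp add: mode_sum_component \<xi>_def)
  then have "z = mode_sum v \<xi>"
    by (simp add: vec_eq_iff split_paired_All)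
  then show ?thesis
    by blast
qed

section \<open>Controllability of the networked system\<close>

lemma mode_sum_zero [simp]: "mode_sum v (\<lambda>_. 0) = 0"
  by (simp add: mode_sum_def vec_eq_iff kronv_def)

lemma mode_sum_left_eigenvector_iff:
  fixes F G :: "'a::field^'n^'n" and W :: "'a^'N^'N" and v :: "'N \<Rightarrow> 'a^'N"
  assumes v_indep: "\<forall>c. (\<Sum>k\<in>UNIV. c k *s v k) = 0 \<longrightarrow> (\<forall>k. c k = 0)"
    and v_eig: "\<forall>k. v k v* W = lam k *s v k"
  shows "mode_sum v \<xi> v* (kron (mat 1) F + kron W G) = \<theta> *s mode_sum v \<xi>
     \<longleftrightarrow> (\<forall>k. \<xi> k v* (F + mat (lam k) ** G) = \<theta> *s \<xi> k)"
  by (simp add: mode_sum_vector_matrix_mult_network[OF v_eig] mode_sum_scale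
      mode_sum_inject[OF v_indep] fun_eq_iff)

lemma independent_family_nonzero:
  assumes "\<forall>c. (\<Sum>k\<in>UNIV. c k *s v k) = 0 \<longrightarrow> (\<forall>k. c k = (0::'a::field))"
  shows "v k \<noteq> 0"
proof
  assume "v k = 0"
  then have "(\<Sum>j\<in>UNIV. (if j = k then 1 else 0) *s v j) = 0"
    by (simp add: if_distrib[of "\<lambda>c. c *s _"] cong: if_cong)
  from assms[rule_format, OF this, of k] show False
    by simp
qed

lemma left_eigenvector_exists: "\<exists>w \<theta>. w \<noteq> 0 \<and> w v* (M::complex^'n^'n) = \<theta> *s w"
  using left_eigenvector_in_invariant_subspace[OF vec.subspace_UNIV _ UNIV_I, of M "axis undefined 1"]
  by (auto simp: axis_eq_0_iff)

lemma network_left_null_trivial: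
  fixes F G :: "'a::field^'n^'n" and W :: "'a^'N^'N" and v :: "'N \<Rightarrow> 'a^'N"
  assumes v_indep: "\<forall>c. (\<Sum>k\<in>UNIV. c k *s v k) = 0 \<longrightarrow> (\<forall>k. c k = 0)"
    and v_eig: "\<forall>k. v k v* W = lam k *s v k"
    and nonsingular: "\<forall>k. det (F + mat (lam k) ** G) \<noteq> 0"
  shows "\<forall>z. z v* (kron (mat 1) F + kron W G) = 0 \<longrightarrow> z = 0"
proof (intro allI impI)
  fix z
  assume "z v* (kron (mat 1) F + kron W G) = 0"
  moreover obtain \<xi> where z: "z = mode_sum v \<xi>"
    using mode_sum_surj[OF v_indep] by blast
  ultimately have "\<xi> k v* (F + mat (lam k) ** G) = 0" for k
    using mode_sum_left_eigenvector_iff[OF v_indep v_eig, of \<xi> F G 0] by simp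
  then have "\<xi> = (\<lambda>_. 0)"
    using vector_matrix_mult_eq_0_if_det_nonzero nonsingular by blast
  then show "z = 0"
    by (simp add: z)
qed

definition joint_modes_controllable ::
    "('N::finite \<Rightarrow> complex^'N) \<Rightarrow> ('N \<Rightarrow> complex^'n^'n) \<Rightarrow> complex^'u^('N \<times> 'n) \<Rightarrow> bool" where
  "joint_modes_controllable v E Psi \<longleftrightarrow>
     (\<forall>(S :: 'N set) (\<theta> :: complex). 1 < card S \<and>
        (\<forall>k\<in>S. \<exists>\<eta>. \<eta> \<noteq> 0 \<and> \<eta> \<in> left_eigenspace \<theta> (E k)) \<longrightarrow>
        (\<forall>\<xi> :: 'N \<Rightarrow> complex^'n.
           (\<forall>k\<in>S. \<xi> k \<in> left_eigenspace \<theta> (E k)) \<and> (\<exists>k\<in>S. \<xi> k \<noteq> 0) \<longrightarrow>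
           (\<Sum>k\<in>S. kronv (v k) (\<xi> k)) v* Psi \<noteq> 0))"

lemma pair_controllable_network_imp_graph:
  fixes F G :: "complex^'n^'n" and W D :: "complex^'N^'N" and B :: "complex^'p^'n"
  assumes "pair_controllable (kron (mat 1) F + kron W G) (kron D B)"
  shows "pair_controllable W D"
  unfolding pair_controllable_iff_left_eigenvectors
proof (intro allI impI)
  fix s w
  assume w: "w v* W = s *s w \<and> w v* D = 0"
  obtain \<xi> \<theta> where \<xi>: "\<xi> \<noteq> 0" "\<xi> v* (F + mat s ** G) = \<theta> *s \<xi>"
    using left_eigenvector_exists by blast
  have "kronv w \<xi> v* (kron (mat 1) F + kron W G) = kronv w (\<xi> v* (F + mat s ** G))"
    using w by (intro kronv_vector_matrix_mult_network) simp
  also have "\<dots> = \<theta> *s kronv w \<xi>"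
    using \<xi>(2) by (simp add: kronv_scale_right)
  finally have "kronv w \<xi> v* (kron (mat 1) F + kron W G) = \<theta> *s kronv w \<xi>" .
  moreover have "kronv w \<xi> v* kron D B = 0"
    using w by (simp add: kronv_vector_matrix_mult)
  ultimately have "kronv w \<xi> = 0"
    using assms unfolding pair_controllable_iff_left_eigenvectors by blast
  with \<xi> show "w = 0"
    by (simp add: kronv_eq_0_iff)
qed

lemma pair_controllable_network_imp_mode:
  fixes F G :: "complex^'n^'n" and W D :: "complex^'N^'N" and B :: "complex^'p^'n"
    and v :: "'N \<Rightarrow> complex^'N"
  assumes v_nonzero: "v k \<noteq> 0" and v_eig: "v k v* W = lam k *s v k"
    and "pair_controllable (kron (mat 1) F + kron W G) (kron D B)"
  shows "pair_controllable (F + mat (lam k) ** G) B"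
  unfolding pair_controllable_iff_left_eigenvectors
proof (intro allI impI)
  fix \<theta> \<xi>
  assume \<xi>: "\<xi> v* (F + mat (lam k) ** G) = \<theta> *s \<xi> \<and> \<xi> v* B = 0"
  have "kronv (v k) \<xi> v* (kron (mat 1) F + kron W G) = \<theta> *s kronv (v k) \<xi>"
    using \<xi> by (simp add: kronv_vector_matrix_mult_network[OF v_eig] kronv_scale_right)
  moreover have "kronv (v k) \<xi> v* kron D B = 0"
    using \<xi> by (simp add: kronv_vector_matrix_mult)
  ultimately have "kronv (v k) \<xi> = 0"
    using assms(3) unfolding pair_controllable_iff_left_eigenvectors by blast
  with v_nonzero show "\<xi> = 0"
    by (simp add: kronv_eq_0_iff)
qed

lemma pair_controllable_network_imp_joint_modes:
  fixes F G :: "complex^'n^'n" and W D :: "complex^'N^'N" and B :: "complex^'p^'n"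
    and v :: "'N \<Rightarrow> complex^'N"
  assumes v_indep: "\<forall>c. (\<Sum>k\<in>UNIV. c k *s v k) = 0 \<longrightarrow> (\<forall>k. c k = 0)"
    and v_eig: "\<forall>k. v k v* W = lam k *s v k"
    and "pair_controllable (kron (mat 1) F + kron W G) (kron D B)"
  shows "joint_modes_controllable v (\<lambda>k. F + mat (lam k) ** G) (kron D B)"
  unfolding joint_modes_controllable_def
proof (intro allI impI)
  fix S \<theta> and \<xi> :: "'N \<Rightarrow> complex^'n"
  assume \<xi>: "(\<forall>k\<in>S. \<xi> k \<in> left_eigenspace \<theta> (F + mat (lam k) ** G)) \<and> (\<exists>k\<in>S. \<xi> k \<noteq> 0)"
  define \<xi>' where "\<xi>' k = (if k \<in> S then \<xi> k else 0)" for k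
  have sum_S: "(\<Sum>k\<in>S. kronv (v k) (\<xi> k)) = mode_sum v \<xi>'"
    by (simp add: mode_sum_eq_sum[of S] \<xi>'_def)
  have "\<xi>' \<noteq> (\<lambda>_. 0)"
    using \<xi> by (auto simp: \<xi>'_def fun_eq_iff)
  then have "mode_sum v \<xi>' \<noteq> 0"
    using mode_sum_inject[OF v_indep, of \<xi>' "\<lambda>_. 0"] by simp
  moreover have "mode_sum v \<xi>' v* (kron (mat 1) F + kron W G) = \<theta> *s mode_sum v \<xi>'"
    using \<xi> by (auto simp: mode_sum_left_eigenvector_iff[OF v_indep v_eig] \<xi>'_def left_eigenspace_def)
  ultimately show "(\<Sum>k\<in>S. kronv (v k) (\<xi> k)) v* kron D B \<noteq> 0"
    using assms(3) unfolding sum_S pair_controllable_iff_left_eigenvectors by blast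
qed

lemma pair_controllable_network_if:
  fixes F G :: "complex^'n^'n" and W D :: "complex^'N^'N" and B :: "complex^'p^'n"
    and v :: "'N \<Rightarrow> complex^'N"
  assumes v_indep: "\<forall>c. (\<Sum>k\<in>UNIV. c k *s v k) = 0 \<longrightarrow> (\<forall>k. c k = 0)"
    and v_eig: "\<forall>k. v k v* W = lam k *s v k"
    and graph: "pair_controllable W D"
    and modes: "\<forall>k. pair_controllable (F + mat (lam k) ** G) B"
    and joint: "joint_modes_controllable v (\<lambda>k. F + mat (lam k) ** G) (kron D B)"
  shows "pair_controllable (kron (mat 1) F + kron W G) (kron D B)"
  unfolding pair_controllable_iff_left_eigenvectors
proof (intro allI impI)
  fix \<theta> z
  assume z: "z v* (kron (mat 1) F + kron W G) = \<theta> *s z \<and> z v* kron D B = 0"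
  obtain \<xi> where z_eq: "z = mode_sum v \<xi>"
    using mode_sum_surj[OF v_indep] by blast
  have "\<forall>k. \<xi> k v* (F + mat (lam k) ** G) = \<theta> *s \<xi> k"
    using z unfolding z_eq mode_sum_left_eigenvector_iff[OF v_indep v_eig] by blast
  then have eig: "\<xi> k \<in> left_eigenspace \<theta> (F + mat (lam k) ** G)" for k
    by (simp add: left_eigenspace_def)
  define S where "S = {k. \<xi> k \<noteq> 0}"
  have sum_S: "mode_sum v \<xi> = (\<Sum>k\<in>S. kronv (v k) (\<xi> k))"
    by (rule mode_sum_eq_sum) (simp add: S_def)
  have "S = {}"
  proof (rule ccontr)
    assume "S \<noteq> {}"
    show False
    proof (cases "card S = 1")
      case True
      then obtain k where "S = {k}"
        by (rule card_1_singletonE)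
      then have "\<xi> k \<noteq> 0" and z_k: "z = kronv (v k) (\<xi> k)"
        by (auto simp: S_def z_eq sum_S)
      moreover have "v k v* D \<noteq> 0"
        using graph independent_family_nonzero[OF v_indep] v_eig
        unfolding pair_controllable_iff_left_eigenvectors by blast
      moreover have "\<xi> k v* B = 0 \<longrightarrow> \<xi> k = 0"
        using modes eig unfolding pair_controllable_iff_left_eigenvectors left_eigenspace_def by blast
      ultimately show False
        using z by (simp add: kronv_vector_matrix_mult kronv_eq_0_iff)
    next
      case False
      moreover have "card S \<noteq> 0"
        using \<open>S \<noteq> {}\<close> by simp
      ultimately have "1 < card S"
        by linarith
      moreover have "\<exists>k\<in>S. \<xi> k \<noteq> 0"
        using \<open>S \<noteq> {}\<close> by (auto simp: S_def)
      ultimately have "(\<Sum>k\<in>S. kronv (v k) (\<xi> k)) v* kron D B \<noteq> 0"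
        using joint eig unfolding joint_modes_controllable_def S_def by blast
      with z show False
        by (simp add: z_eq sum_S)
    qed
  qed
  then show "z = 0"
    by (simp add: z_eq sum_S)
qed

theorem pair_controllable_network_iff:
  fixes F G :: "complex^'n^'n" and W D :: "complex^'N^'N" and B :: "complex^'p^'n"
    and v :: "'N \<Rightarrow> complex^'N"
  assumes v_indep: "\<forall>c. (\<Sum>k\<in>UNIV. c k *s v k) = 0 \<longrightarrow> (\<forall>k. c k = 0)"
    and v_eig: "\<forall>k. v k v* W = lam k *s v k"
  shows "pair_controllable (kron (mat 1) F + kron W G) (kron D B) \<longleftrightarrow>
     pair_controllable W D \<and> (\<forall>k. pair_controllable (F + mat (lam k) ** G) B)
     \<and> joint_modes_controllable v (\<lambda>k. F + mat (lam k) ** G) (kron D B)"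
proof
  assume pc: "pair_controllable (kron (mat 1) F + kron W G) (kron D B)"
  show "pair_controllable W D \<and> (\<forall>k. pair_controllable (F + mat (lam k) ** G) B)
     \<and> joint_modes_controllable v (\<lambda>k. F + mat (lam k) ** G) (kron D B)"
  proof (intro conjI allI)
    show "pair_controllable W D"
      using pc by (rule pair_controllable_network_imp_graph)
    show "pair_controllable (F + mat (lam k) ** G) B" for k
      by (rule pair_controllable_network_imp_mode[OF independent_family_nonzero[OF v_indep]
            v_eig[rule_format] pc])
    show "joint_modes_controllable v (\<lambda>k. F + mat (lam k) ** G) (kron D B)"
      using v_indep v_eig pc by (rule pair_controllable_network_imp_joint_modes)
  qed
qed (use pair_controllable_network_if[OF v_indep v_eig] in blast)

theorem corollary1:
  fixes A :: "real^'n^'n" and B :: "real^'p^'n" and C :: "real^'n^'m" and H :: "real^'m^'n"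
    and W :: "real^'N^'N" and \<delta> :: "'N \<Rightarrow> real" and h :: real
    and v :: "'N \<Rightarrow> complex^'N" and lam :: "'N \<Rightarrow> complex"
  defines "Dlt \<equiv> (\<chi> i j. if i = j then \<delta> i else 0) :: real^'N^'N"
  defines "Bh \<equiv> integral {0..h} (\<lambda>\<tau>. mexp (\<tau> *\<^sub>R A)) ** B"
  defines "Hh \<equiv> integral {0..h} (\<lambda>\<tau>. mexp (\<tau> *\<^sub>R A)) ** (H ** C)"
  defines "Phis \<equiv> kron (mat 1 :: real^'N^'N) (mexp (h *\<^sub>R A)) + kron W Hh"
  defines "Psis \<equiv> kron Dlt Bh"
  defines "E \<equiv> (\<lambda>k. cmat (mexp (h *\<^sub>R A)) + mat (lam k) ** cmat Hh)"
  assumes hpos: "h > 0"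
    and Wdiag0: "\<forall>i. W $ i $ i = 0"
    and delta01: "\<forall>i. \<delta> i \<in> {0, 1}"
    and v_indep: "\<forall>c :: 'N \<Rightarrow> complex. (\<Sum>k\<in>UNIV. c k *s v k) = 0 \<longrightarrow> (\<forall>k. c k = 0)"
    and v_eig: "\<forall>k. v k v* cmat W = lam k *s v k"
    and E_nonsing: "\<forall>k. det (E k) \<noteq> 0"
  shows "dt_controllable Phis Psis \<longleftrightarrow>
     pair_controllable (cmat W) (cmat Dlt)
     \<and> (\<forall>k. pair_controllable (E k) (cmat Bh))
     \<and> (\<forall>(S :: 'N set) (\<theta> :: complex). 1 < card S \<and>
            (\<forall>k\<in>S. \<exists>\<eta>. \<eta> \<noteq> 0 \<and> \<eta> \<in> left_eigenspace \<theta> (E k)) \<longrightarrow>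
            (\<forall>\<xi> :: 'N \<Rightarrow> complex^'n.
               (\<forall>k\<in>S. \<xi> k \<in> left_eigenspace \<theta> (E k)) \<and> (\<exists>k\<in>S. \<xi> k \<noteq> 0) \<longrightarrow>
               (\<Sum>k\<in>S. kronv (v k) (\<xi> k)) v* kron (cmat Dlt) (cmat Bh) \<noteq> 0))"
proof -
  let ?F = "cmat (mexp (h *\<^sub>R A))"
  have Phi: "cmat Phis = kron (mat 1) ?F + kron (cmat W) (cmat Hh)"
    by (simp add: Phis_def cmat_add cmat_kron cmat_mat)
  have Psi: "cmat Psis = kron (cmat Dlt) (cmat Bh)"
    by (simp add: Psis_def cmat_kron)
  have "\<forall>z. z v* cmat Phis = 0 \<longrightarrow> z = 0"
    unfolding Phi using E_nonsing by (intro network_left_null_trivial[OF v_indep v_eig]) (simp add: E_def)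
  then have "dt_controllable Phis Psis \<longleftrightarrow> pair_controllable (cmat Phis) (cmat Psis)"
    by (rule dt_controllable_iff_pair_controllable)
  also have "\<dots> \<longleftrightarrow> pair_controllable (cmat W) (cmat Dlt) \<and> (\<forall>k. pair_controllable (E k) (cmat Bh))
      \<and> joint_modes_controllable v E (kron (cmat Dlt) (cmat Bh))"
    unfolding Phi Psi E_def by (rule pair_controllable_network_iff[OF v_indep v_eig])
  finally show ?thesis
    unfolding joint_modes_controllable_def .
qed

end
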